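(* Let $G=(V,E)$ be a finite simple connected graph without isolated vertices which has two different vertices $u$ and $v$ satisfying $N[u]\subseteq N[v]$. Then Dom has a winning strategy in the Dom-start Disjoint Domination Game played on $G$.
   Context: For a vertex $v$, $N[v]$ denotes its closed neighborhood. The Disjoint Domination Game on an isolate-free graph $G$ is played by Dom and Sepy with colors $p$ and $b$; $V_p,V_b$ denote the current sets of vertices of each color. Players alternate; either player may use either color. A move chooses a vertex $v$ and a color $c$ such that (i) $v$ is uncolored and (ii) some $w\in N[v]$ satisfies $N[w]\cap V_c=\emptyset$ (before the move); then $v$ gets color $c$. A player must make a legal move on his turn (no passing). The game ends as soon as either (s* ) some vertex $x$ has $N[x]\subseteq V_p$ or $N[x]\subseteq V_b$ — Sepy wins; or (d* ) both $V_p$ and $V_b$ are dominating sets of $G$ — Dom wins. In the Dom-start game Dom moves first. *)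

theory Defs
  imports Main
begin

definition simple_graph :: "'a set \<Rightarrow> ('a \<Rightarrow> 'a \<Rightarrow> bool) \<Rightarrow> bool" where
  "simple_graph V E \<longleftrightarrow> finite V \<and> (\<forall>x y. E x y \<longrightarrow> x \<in> V \<and> y \<in> V)
     \<and> (\<forall>x y. E x y \<longrightarrow> E y x) \<and> (\<forall>x. \<not> E x x)"

definition connected_graph :: "'a set \<Rightarrow> ('a \<Rightarrow> 'a \<Rightarrow> bool) \<Rightarrow> bool" where
  "connected_graph V E \<longleftrightarrow> (\<forall>x\<in>V. \<forall>y\<in>V. E\<^sup>*\<^sup>* x y)"

definition isolate_free :: "'a set \<Rightarrow> ('a \<Rightarrow> 'a \<Rightarrow> bool) \<Rightarrow> bool" where
  "isolate_free V E \<longleftrightarrow> (\<forall>x\<in>V. \<exists>y. E x y)"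

definition cnbhd :: "('a \<Rightarrow> 'a \<Rightarrow> bool) \<Rightarrow> 'a \<Rightarrow> 'a set" where
  "cnbhd E v = insert v {w. E v w}"

definition dominating :: "'a set \<Rightarrow> ('a \<Rightarrow> 'a \<Rightarrow> bool) \<Rightarrow> 'a set \<Rightarrow> bool" where
  "dominating V E D \<longleftrightarrow> D \<subseteq> V \<and> (\<forall>x\<in>V. cnbhd E x \<inter> D \<noteq> {})"

datatype color = P | B

definition upd_col :: "color \<Rightarrow> 'a \<Rightarrow> 'a set \<Rightarrow> 'a set \<Rightarrow> 'a set \<times> 'a set" where
  "upd_col c v Vp Vb = (if c = P then (insert v Vp, Vb) else (Vp, insert v Vb))"

definition col_set :: "color \<Rightarrow> 'a set \<Rightarrow> 'a set \<Rightarrow> 'a set" where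
  "col_set c Vp Vb = (if c = P then Vp else Vb)"

definition legal_move :: "'a set \<Rightarrow> ('a \<Rightarrow> 'a \<Rightarrow> bool) \<Rightarrow> 'a set \<Rightarrow> 'a set \<Rightarrow> 'a \<Rightarrow> color \<Rightarrow> bool" where
  "legal_move V E Vp Vb v c \<longleftrightarrow> v \<in> V \<and> v \<notin> Vp \<and> v \<notin> Vb \<and>
     (\<exists>w\<in>cnbhd E v. cnbhd E w \<inter> col_set c Vp Vb = {})"

definition sepy_cond :: "'a set \<Rightarrow> ('a \<Rightarrow> 'a \<Rightarrow> bool) \<Rightarrow> 'a set \<Rightarrow> 'a set \<Rightarrow> bool" where
  "sepy_cond V E Vp Vb \<longleftrightarrow> (\<exists>x\<in>V. cnbhd E x \<subseteq> Vp \<or> cnbhd E x \<subseteq> Vb)"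

definition dom_cond :: "'a set \<Rightarrow> ('a \<Rightarrow> 'a \<Rightarrow> bool) \<Rightarrow> 'a set \<Rightarrow> 'a set \<Rightarrow> bool" where
  "dom_cond V E Vp Vb \<longleftrightarrow> dominating V E Vp \<and> dominating V E Vb"

text \<open>dom_wins V E t Vp Vb: from position (Vp,Vb), with Dom to move iff t,
  Dom has a winning strategy. (Least fixed point = Dom forces a win in finitely many moves.)\<close>
inductive dom_wins :: "'a set \<Rightarrow> ('a \<Rightarrow> 'a \<Rightarrow> bool) \<Rightarrow> bool \<Rightarrow> 'a set \<Rightarrow> 'a set \<Rightarrow> bool"
  for V E where
  won: "\<not> sepy_cond V E Vp Vb \<Longrightarrow> dom_cond V E Vp Vb \<Longrightarrow> dom_wins V E t Vp Vb"
| dom_move: "\<not> sepy_cond V E Vp Vb \<Longrightarrow> \<not> dom_cond V E Vp Vb \<Longrightarrow> legal_move V E Vp Vb v c \<Longrightarrow>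
     dom_wins V E False (fst (upd_col c v Vp Vb)) (snd (upd_col c v Vp Vb)) \<Longrightarrow>
     dom_wins V E True Vp Vb"
| sepy_move: "\<not> sepy_cond V E Vp Vb \<Longrightarrow> \<not> dom_cond V E Vp Vb \<Longrightarrow>
     (\<exists>v c. legal_move V E Vp Vb v c) \<Longrightarrow>
     (\<forall>v c. legal_move V E Vp Vb v c \<longrightarrow>
        dom_wins V E True (fst (upd_col c v Vp Vb)) (snd (upd_col c v Vp Vb))) \<Longrightarrow>
     dom_wins V E False Vp Vb"

end

theory Submission
  imports Defs
begin

text \<open>
  Dom opens by colouring \<open>v\<close> with \<open>p\<close> and then keeps every coloured vertex other than \<open>v\<close>
  adjacent to a vertex of the other colour.  Such a position is never a win for Sepy:
  a coloured vertex sees both colours in its closed neighbourhood, except \<open>v\<close>, which sees \<open>u\<close>;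
  and \<open>u\<close> never receives \<open>p\<close>, because \<open>N[u] \<subseteq> N[v]\<close> puts \<open>v\<close> into \<open>N[w]\<close> for every \<open>w \<in> N[u]\<close>.
  After each move of Sepy, Dom restores the invariant: either the freshly coloured vertex already
  has a neighbour of the other colour, or Dom colours one of its uncoloured neighbours with the
  other colour.  If the invariant already holds and the game is not over, Dom finds a move that
  keeps it, using connectivity to reach vertices far from the coloured part.
  Since the number of uncoloured vertices decreases, Dom eventually dominates with both colours.
\<close>

fun opp :: "color \<Rightarrow> color" where
  "opp P = B"
| "opp B = P"

lemma mem_cnbhd_iff: "w \<in> cnbhd E x \<longleftrightarrow> w = x \<or> E x w"
  by (auto simp: cnbhd_def)

lemma upd_col_mono: "upd_col c y A C = (A', C') \<Longrightarrow> A \<subseteq> A' \<and> C \<subseteq> C'"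
  by (cases c) (auto simp: upd_col_def)

lemma upd_col_Un: "upd_col c y A C = (A', C') \<Longrightarrow> A' \<union> C' = insert y (A \<union> C)"
  by (cases c) (auto simp: upd_col_def)

lemma col_set_opp_upd_col:
  "upd_col c y A C = (A', C') \<Longrightarrow> col_set (opp c) A' C' = col_set (opp c) A C"
  by (cases c) (auto simp: upd_col_def col_set_def)

lemma opp_opp [simp]: "opp (opp c) = c"
  by (cases c) simp_all

lemma col_set_subset_Un: "col_set c A C \<subseteq> A \<union> C"
  by (simp add: col_set_def)

lemma mem_col_set_opp: "x \<in> A \<union> C \<Longrightarrow> x \<notin> col_set c A C \<Longrightarrow> x \<in> col_set (opp c) A C"
  by (cases c) (auto simp: col_set_def)

lemma sepy_cond_mono: "sepy_cond V E A C \<Longrightarrow> A \<subseteq> A' \<Longrightarrow> C \<subseteq> C' \<Longrightarrow> sepy_cond V E A' C'"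
  unfolding sepy_cond_def by blast

lemma card_uncoloured_upd_col_less:
  assumes "finite V" and "legal_move V E A C y c" and "upd_col c y A C = (A', C')"
  shows "card (V - (A' \<union> C')) < card (V - (A \<union> C))"
proof -
  have "A' \<union> C' = insert y (A \<union> C)"
    using assms(3) by (rule upd_col_Un)
  moreover have "V - insert y (A \<union> C) \<subset> V - (A \<union> C)"
    using assms(2) by (auto simp: legal_move_def)
  ultimately show ?thesis
    using assms(1) by (simp add: psubset_card_mono)
qed

lemma not_sepy_cond_if_invariant_within_one_move:
  assumes safe: "\<And>A C. I A C \<Longrightarrow> \<not> sepy_cond V E A C"
    and "I A C \<or> (\<exists>z d. legal_move V E A C z d \<and> case_prod I (upd_col d z A C))"
  shows "\<not> sepy_cond V E A C"
proof
  assume sepy: "sepy_cond V E A C"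
  then have "\<not> I A C"
    using safe by blast
  then obtain z d A' C' where "upd_col d z A C = (A', C')" and "I A' C'"
    using assms(2) by (metis case_prod_conv surj_pair)
  then show False
    using safe sepy sepy_cond_mono upd_col_mono by metis
qed

lemma dom_wins_from_invariant:
  assumes "finite V"
    and safe: "\<And>A C. I A C \<Longrightarrow> \<not> sepy_cond V E A C"
    and extend: "\<And>A C. I A C \<Longrightarrow> \<not> dom_cond V E A C \<Longrightarrow>
      \<exists>z d. legal_move V E A C z d \<and> case_prod I (upd_col d z A C)"
    and restore: "\<And>A C y c A' C'. I A C \<Longrightarrow> legal_move V E A C y c \<Longrightarrow>
      upd_col c y A C = (A', C') \<Longrightarrow>
      I A' C' \<or> (\<exists>z d. legal_move V E A' C' z d \<and> case_prod I (upd_col d z A' C'))"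
    and "I A C"
  shows "dom_wins V E False A C"
  using \<open>I A C\<close>
proof (induction "card (V - (A \<union> C))" arbitrary: A C rule: less_induct)
  case less
  have reply: "dom_wins V E True A' C'"
    if move: "legal_move V E A C y c" and pos: "upd_col c y A C = (A', C')" for y c A' C'
  proof -
    have reply_into_I: "\<exists>z d. legal_move V E A' C' z d \<and> case_prod I (upd_col d z A' C')"
      if "\<not> dom_cond V E A' C'"
      using restore[OF less.prems move pos] extend[OF _ that] by blast
    have no_sepy: "\<not> sepy_cond V E A' C'"
      using safe restore[OF less.prems move pos] by (rule not_sepy_cond_if_invariant_within_one_move)
    show ?thesis
    proof (cases "dom_cond V E A' C'")
      case True
      then show ?thesis using no_sepy by (rule dom_wins.won[rotated])
    next
      case False
      then obtain z d A'' C'' where move': "legal_move V E A' C' z d"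
        and pos': "upd_col d z A' C' = (A'', C'')" and I'': "I A'' C''"
        using reply_into_I by (metis case_prod_conv surj_pair)
      have "card (V - (A'' \<union> C'')) < card (V - (A \<union> C))"
        using card_uncoloured_upd_col_less[OF \<open>finite V\<close> move' pos']
          card_uncoloured_upd_col_less[OF \<open>finite V\<close> move pos] by linarith
      then have "dom_wins V E False A'' C''"
        using less.hyps I'' by blast
      then show ?thesis
        using dom_wins.dom_move[OF no_sepy False move'] pos' by simp
    qed
  qed
  show ?case
  proof (cases "dom_cond V E A C")
    case True
    then show ?thesis using safe[OF less.prems] by (rule dom_wins.won[rotated])
  next
    case False
    show ?thesis
    proof (rule dom_wins.sepy_move[OF safe[OF less.prems] False])
      show "\<exists>y c. legal_move V E A C y c"
        using extend[OF less.prems False] by blast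
      show "\<forall>y c. legal_move V E A C y c \<longrightarrow>
          dom_wins V E True (fst (upd_col c y A C)) (snd (upd_col c y A C))"
        using reply by simp
    qed
  qed
qed

lemma simple_graph_symp: "simple_graph V E \<Longrightarrow> symp E"
  by (simp add: simple_graph_def symp_def)

lemma cnbhd_sym: "symp E \<Longrightarrow> x \<in> cnbhd E y \<longleftrightarrow> y \<in> cnbhd E x"
  by (metis mem_cnbhd_iff sympD)

lemma legal_move_has_neighbour_outside:
  assumes "isolate_free V E" and "legal_move V E A C y c"
  shows "\<exists>t. E y t \<and> t \<notin> col_set c A C"
proof -
  obtain w where w: "w \<in> cnbhd E y" "cnbhd E w \<inter> col_set c A C = {}"
    using assms(2) by (auto simp: legal_move_def)
  show ?thesis
  proof (cases "w = y")
    case True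
    obtain t where "E y t"
      using assms by (auto simp: isolate_free_def legal_move_def)
    then show ?thesis using w True by (auto simp: mem_cnbhd_iff)
  next
    case False
    then show ?thesis using w by (auto simp: mem_cnbhd_iff)
  qed
qed

text \<open>
  Take \<open>z\<close> to be the vertex nearest to \<open>x\<close> on the path whose closed neighbourhood meets \<open>C\<close>,
  and \<open>w\<close> its successor.
\<close>
lemma rtranclp_boundary_vertex:
  assumes "symp E" and "E\<^sup>*\<^sup>* a x" and "a \<in> C" and "cnbhd E x \<inter> C = {}"
  shows "\<exists>z b w. z \<notin> C \<and> b \<in> C \<and> E z b \<and> w \<in> cnbhd E z \<and> cnbhd E w \<inter> C = {}"
  using assms(2-4)
proof (induction rule: rtranclp_induct)
  case base
  then show ?case by (auto simp: mem_cnbhd_iff)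
next
  case (step m x)
  show ?case
  proof (cases "cnbhd E m \<inter> C = {}")
    case True
    then show ?thesis using step by blast
  next
    case False
    then obtain b where b: "b \<in> cnbhd E m" "b \<in> C" by auto
    have "m \<in> cnbhd E x"
      using sympD[OF \<open>symp E\<close> step.hyps(2)] by (simp add: mem_cnbhd_iff)
    then have "m \<notin> C"
      using step.prems(2) by blast
    moreover have "x \<in> cnbhd E m"
      using step.hyps(2) by (simp add: mem_cnbhd_iff)
    ultimately show ?thesis
      using b step.prems(2) by (auto simp: mem_cnbhd_iff)
  qed
qed

locale dominated_pair =
  fixes V :: "'a set" and E :: "'a \<Rightarrow> 'a \<Rightarrow> bool" and u v :: 'a
  assumes simple: "simple_graph V E" and connected: "connected_graph V E"
    and no_isolates: "isolate_free V E"
    and u_in_V: "u \<in> V" and v_in_V: "v \<in> V" and u_neq_v: "u \<noteq> v"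
    and cnbhd_subset: "cnbhd E u \<subseteq> cnbhd E v"
begin

lemma symp_E: "symp E"
  using simple by (rule simple_graph_symp)

lemma edge_sym: "E x y \<Longrightarrow> E y x"
  using symp_E by (rule sympD)

lemma not_edge_refl: "\<not> E x x"
  using simple by (simp add: simple_graph_def)

lemma edge_in_V: "E x y \<Longrightarrow> x \<in> V \<and> y \<in> V"
  using simple by (simp add: simple_graph_def)

lemma E_v_u: "E v u"
  using cnbhd_subset u_neq_v by (auto simp: cnbhd_def)

definition balanced :: "'a set \<Rightarrow> 'a set \<Rightarrow> bool" where
  "balanced Vp Vb \<longleftrightarrow> Vp \<subseteq> V \<and> Vb \<subseteq> V \<and> Vp \<inter> Vb = {} \<and> v \<in> Vp \<and> u \<notin> Vp \<and>
     (\<forall>x\<in>Vp - {v}. \<exists>y\<in>Vb. E x y) \<and> (\<forall>x\<in>Vb. \<exists>y\<in>Vp. E x y)"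

lemma balanced_partner:
  assumes "balanced Vp Vb" and "x \<in> col_set d Vp Vb" and "x \<noteq> v"
  shows "\<exists>y\<in>col_set (opp d) Vp Vb. E x y"
  using assms by (cases d) (auto simp: balanced_def col_set_def)

lemma balanced_not_sepy_cond:
  assumes bal: "balanced Vp Vb"
  shows "\<not> sepy_cond V E Vp Vb"
proof
  assume "sepy_cond V E Vp Vb"
  then obtain x where "cnbhd E x \<subseteq> col_set P Vp Vb \<or> cnbhd E x \<subseteq> col_set B Vp Vb"
    by (auto simp: sepy_cond_def col_set_def)
  then obtain d where mono: "cnbhd E x \<subseteq> col_set d Vp Vb"
    by blast
  have "x \<in> col_set d Vp Vb"
    using mono by (auto simp: cnbhd_def)
  show False
  proof (cases "x = v")
    case True
    have "u \<notin> col_set d Vp Vb"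
      using bal \<open>x \<in> col_set d Vp Vb\<close> True by (cases d) (auto simp: balanced_def col_set_def)
    then show False
      using mono True E_v_u by (auto simp: mem_cnbhd_iff)
  next
    case False
    then obtain y where "y \<in> col_set (opp d) Vp Vb" "E x y"
      using balanced_partner[OF bal \<open>x \<in> col_set d Vp Vb\<close>] by blast
    then show False
      using mono bal by (cases d) (auto simp: balanced_def col_set_def mem_cnbhd_iff)
  qed
qed

lemma not_legal_move_u_P:
  assumes "v \<in> Vp"
  shows "\<not> legal_move V E Vp Vb u P"
proof
  assume "legal_move V E Vp Vb u P"
  then obtain w where w: "w \<in> cnbhd E u" "cnbhd E w \<inter> Vp = {}"
    by (auto simp: legal_move_def col_set_def)
  then have "w \<in> cnbhd E v"
    using cnbhd_subset by blast
  then have "v \<in> cnbhd E w"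
    using cnbhd_sym[OF symp_E] by blast
  then show False
    using w assms by blast
qed

lemma balanced_upd_col:
  assumes bal: "balanced Vp Vb" and move: "legal_move V E Vp Vb z c"
    and "y \<in> col_set (opp c) Vp Vb" and "E z y"
  shows "case_prod balanced (upd_col c z Vp Vb)"
proof -
  have "c = P \<Longrightarrow> z \<noteq> u"
    using bal move not_legal_move_u_P by (auto simp: balanced_def)
  then show ?thesis
    using assms
    by (cases c) (auto simp: balanced_def legal_move_def col_set_def upd_col_def intro: edge_sym)
qed

lemma balanced_upd_col_pair:
  assumes bal: "balanced Vp Vb" and move: "legal_move V E Vp Vb y c"
    and pos: "upd_col c y Vp Vb = (A', C')"
    and reply: "legal_move V E A' C' t (opp c)" and "E y t"
  shows "case_prod balanced (upd_col (opp c) t A' C')"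
proof -
  have "v \<in> A'"
    using bal pos upd_col_mono by (fastforce simp: balanced_def)
  then have "c = P \<Longrightarrow> y \<noteq> u" and "c = B \<Longrightarrow> t \<noteq> u"
    using bal move reply not_legal_move_u_P by (auto simp: balanced_def)
  then show ?thesis
    using assms
    by (cases c) (auto simp: balanced_def legal_move_def col_set_def upd_col_def intro: edge_sym)
qed

lemma balanced_extend:
  assumes bal: "balanced Vp Vb" and not_won: "\<not> dom_cond V E Vp Vb"
  shows "\<exists>z d. legal_move V E Vp Vb z d \<and> case_prod balanced (upd_col d z Vp Vb)"
proof -
  have move_into: "?thesis" if "legal_move V E Vp Vb z d" "y \<in> col_set (opp d) Vp Vb" "E z y"
    for z d y
    using balanced_upd_col[OF bal that] that(1) by (intro exI conjI)
  obtain x where "x \<in> V" and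
      "cnbhd E x \<inter> col_set P Vp Vb = {} \<or> cnbhd E x \<inter> col_set B Vp Vb = {}"
    using not_won bal by (auto simp: dom_cond_def dominating_def balanced_def col_set_def)
  then obtain c where "x \<in> V" and missing: "cnbhd E x \<inter> col_set c Vp Vb = {}"
    by blast
  have x_in: "x \<in> cnbhd E x"
    by (simp add: mem_cnbhd_iff)
  consider (coloured) "x \<in> Vp \<union> Vb"
    | (touching) a where "x \<notin> Vp \<union> Vb" "a \<in> cnbhd E x" "a \<in> Vp \<union> Vb"
    | (far) "cnbhd E x \<inter> (Vp \<union> Vb) = {}"
    by blast
  then show ?thesis
  proof cases
    case coloured
    have "x \<in> col_set (opp c) Vp Vb"
      using coloured missing x_in by (blast intro: mem_col_set_opp)
    moreover have "\<not> (\<exists>y\<in>col_set c Vp Vb. E x y)"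
      using missing by (auto simp: mem_cnbhd_iff)
    ultimately have "x = v"
      using balanced_partner[OF bal] by fastforce
    then have "c = B"
      using bal \<open>x \<in> col_set (opp c) Vp Vb\<close> by (cases c) (auto simp: balanced_def col_set_def)
    have "v \<in> cnbhd E u"
      using E_v_u by (simp add: mem_cnbhd_iff edge_sym)
    moreover have "u \<notin> Vp \<union> Vb"
      using bal missing E_v_u \<open>x = v\<close> \<open>c = B\<close> by (auto simp: balanced_def col_set_def mem_cnbhd_iff)
    ultimately have "legal_move V E Vp Vb u B"
      using u_in_V missing \<open>x = v\<close> \<open>c = B\<close> by (auto simp: legal_move_def)
    moreover have "v \<in> col_set (opp B) Vp Vb"
      using bal by (simp add: balanced_def col_set_def)
    ultimately show ?thesis
      using move_into edge_sym[OF E_v_u] by blast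
  next
    case touching
    then have "E x a"
      by (auto simp: mem_cnbhd_iff)
    moreover have "a \<in> col_set (opp c) Vp Vb"
      using touching missing by (blast intro: mem_col_set_opp)
    moreover have "legal_move V E Vp Vb x c"
      using \<open>x \<in> V\<close> touching(1) missing x_in by (auto simp: legal_move_def)
    ultimately show ?thesis
      using move_into by blast
  next
    case far
    have "E\<^sup>*\<^sup>* v x"
      using connected v_in_V \<open>x \<in> V\<close> unfolding connected_graph_def by blast
    moreover have "v \<in> Vp \<union> Vb"
      using bal by (simp add: balanced_def)
    ultimately obtain z b w where z: "z \<notin> Vp \<union> Vb" "b \<in> Vp \<union> Vb" "E z b" "w \<in> cnbhd E z"
        "cnbhd E w \<inter> (Vp \<union> Vb) = {}"
      using rtranclp_boundary_vertex[OF symp_E _ _ far] by blast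
    have "b \<in> col_set P Vp Vb \<or> b \<in> col_set B Vp Vb"
      using z(2) by (simp add: col_set_def)
    then obtain d where "b \<in> col_set d Vp Vb"
      by blast
    have "cnbhd E w \<inter> col_set (opp d) Vp Vb = {}"
      using z(5) col_set_subset_Un[of "opp d" Vp Vb] by blast
    then have "legal_move V E Vp Vb z (opp d)"
      using z(1,4) edge_in_V[OF z(3)] unfolding legal_move_def by blast
    then show ?thesis
      using move_into[of z "opp d" b] \<open>b \<in> col_set d Vp Vb\<close> z(3) by simp
  qed
qed

lemma balanced_restore:
  assumes bal: "balanced Vp Vb" and move: "legal_move V E Vp Vb y c"
    and pos: "upd_col c y Vp Vb = (A', C')"
  shows "balanced A' C' \<or>
    (\<exists>z d. legal_move V E A' C' z d \<and> case_prod balanced (upd_col d z A' C'))"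
proof (cases "\<exists>s\<in>col_set (opp c) Vp Vb. E y s")
  case True
  then show ?thesis
    using balanced_upd_col[OF bal move] pos by auto
next
  case False
  obtain t where "E y t" and "t \<notin> col_set c Vp Vb"
    using legal_move_has_neighbour_outside[OF no_isolates move] by blast
  have y_free: "y \<notin> Vp \<union> Vb"
    using move by (simp add: legal_move_def)
  have "t \<notin> Vp \<union> Vb"
    using False \<open>E y t\<close> \<open>t \<notin> col_set c Vp Vb\<close> mem_col_set_opp[of t Vp Vb c] by blast
  moreover have "t \<noteq> y"
    using \<open>E y t\<close> not_edge_refl by blast
  ultimately have t_free: "t \<notin> A' \<union> C'"
    by (simp add: upd_col_Un[OF pos])
  have "cnbhd E y \<inter> col_set (opp c) Vp Vb = {}"
    using False y_free col_set_subset_Un[of "opp c" Vp Vb] by (auto simp: mem_cnbhd_iff)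
  then have y_witness: "cnbhd E y \<inter> col_set (opp c) A' C' = {}"
    by (simp add: col_set_opp_upd_col[OF pos])
  have "y \<in> cnbhd E t"
    using \<open>E y t\<close> by (simp add: mem_cnbhd_iff edge_sym)
  then have "legal_move V E A' C' t (opp c)"
    using t_free y_witness edge_in_V[OF \<open>E y t\<close>] unfolding legal_move_def by blast
  moreover from this have "case_prod balanced (upd_col (opp c) t A' C')"
    by (rule balanced_upd_col_pair[OF bal move pos _ \<open>E y t\<close>])
  ultimately show ?thesis
    by (intro disjI2 exI conjI)
qed

end

theorem theorem8:
  fixes V :: "'a set" and E :: "'a \<Rightarrow> 'a \<Rightarrow> bool" and u v :: 'a
  assumes "simple_graph V E" and "connected_graph V E" and "isolate_free V E"
    and "u \<in> V" and "v \<in> V" and "u \<noteq> v"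
    and "cnbhd E u \<subseteq> cnbhd E v"
  shows "dom_wins V E True {} {}"
proof -
  interpret dominated_pair V E u v
    using assms by unfold_locales
  have "finite V"
    using assms(1) by (simp add: simple_graph_def)
  have "balanced {v} {}"
    using v_in_V u_neq_v by (simp add: balanced_def)
  with \<open>finite V\<close> balanced_not_sepy_cond balanced_extend balanced_restore
  have "dom_wins V E False {v} {}"
    by (rule dom_wins_from_invariant)
  then have after_opening: "dom_wins V E False (fst (upd_col P v {} {})) (snd (upd_col P v {} {}))"
    by (simp add: upd_col_def)
  have "\<not> sepy_cond V E {} {}"
    by (simp add: sepy_cond_def cnbhd_def)
  moreover have "\<not> dom_cond V E {} {}"
    using u_in_V by (auto simp: dom_cond_def dominating_def)
  moreover have "legal_move V E {} {} v P"
    using v_in_V by (auto simp: legal_move_def col_set_def cnbhd_def)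
  ultimately show ?thesis
    using after_opening by (rule dom_wins.dom_move)
qed

end
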